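(* Let $m\ge1$, $y\in\mathbb{R}^{2m+1}_+$ with $c:=\sqrt{\sum_{i=0}^{2m}y_i}>0$, and let $(x^t)_{t\ge0}$ be generated by $$x^{t+1}_j=x^t_j\,\frac1c\sum_{\ell=0}^m\frac{x^t_\ell\,y_{\ell+j}}{(x^t*x^t)_{\ell+j}},\qquad j=0,\dots,m,$$ from an initial $x^0\in\mathbb{R}^{m+1}_+$. Then $\mathcal{I}(y\|x^\infty*x^\infty)$ takes the same value for all limit points $x^\infty$ of $(x^t)$.
   Context: For $x\in\mathbb{R}^{m+1}$ set $x_k=0$ for $k<0$, $k>m$, and $(x*x)_i=\sum_{j=0}^i x_{i-j}x_j$ for $i=0,\dots,2m$. $\mathcal{I}(y\|v)=\sum_{i}\big(y_i\log\frac{y_i}{v_i}-y_i+v_i\big)$ (convention $0\log0=0$; $+\infty$ if some $y_i>0=v_i$). The iteration is assumed well-defined (denominators positive, e.g. $x^0>0$). *)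

theory Defs
  imports "HOL-Analysis.Analysis"
begin

text \<open>Vectors x in R^{m+1} are functions nat => real with x k = 0 for k > m.
  Self-convolution (x*x)_i = sum_{j=0..i} x_{i-j} x_j.\<close>
definition conv :: "(nat \<Rightarrow> real) \<Rightarrow> (nat \<Rightarrow> real) \<Rightarrow> nat \<Rightarrow> real" where
  "conv x z i = (\<Sum>j=0..i. x (i - j) * z j)"

definition step :: "nat \<Rightarrow> (nat \<Rightarrow> real) \<Rightarrow> (nat \<Rightarrow> real) \<Rightarrow> nat \<Rightarrow> real" where
  "step m y x = (\<lambda>j. if j \<le> m then
      x j * (1 / sqrt (\<Sum>i=0..2*m. y i)) * (\<Sum>l=0..m. x l * y (l + j) / conv x x (l + j))
    else 0)"

definition Idiv :: "nat \<Rightarrow> (nat \<Rightarrow> real) \<Rightarrow> (nat \<Rightarrow> real) \<Rightarrow> ereal" where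
  "Idiv m y v = (if \<exists>i\<le>2*m. y i > 0 \<and> v i = 0 then \<infinity>
     else ereal (\<Sum>i=0..2*m. (if y i = 0 then 0 else y i * ln (y i / v i)) - y i + v i))"

definition is_limit_point :: "nat \<Rightarrow> (nat \<Rightarrow> nat \<Rightarrow> real) \<Rightarrow> (nat \<Rightarrow> real) \<Rightarrow> bool" where
  "is_limit_point m X z \<longleftrightarrow> (\<forall>k>m. z k = 0) \<and>
     (\<exists>r. strict_mono r \<and> (\<forall>j\<le>m. (\<lambda>n. X (r n) j) \<longlonglongrightarrow> z j))"

end

(*
  Up to a constant, I(y || x*x) is -L(x), where L(x) = loglik m y x is
  sum_i y_i ln (x*x)_i - (sum_j x_j)^2, and the iteration is an EM step for L: with the
  multipliers r = x^(t+1) / x^t, Jensen's inequality for ln with the weights x_(i-j) x_j / (x*x)_i,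
  the bound r ln r >= r - 1 and the normalisation sum_j x^(t+1)_j = c give
  L(x^(t+1)) - L(x^t) >= (c - sum_j x^t_j)^2 >= 0.
  Since L(x^t) >= L(x^0) while the entries of x^t*x^t sum to c^2, the entries (x^t*x^t)_i with
  y_i > 0 stay bounded away from 0, so L is continuous at every limit point. A monotone sequence
  with a convergent subsequence converges, so L takes the value lim L(x^t) at every limit point.
*)

theory Submission
  imports Defs
begin

lemma sum_antidiagonals_eq_sum_square:
  fixes h :: "nat \<Rightarrow> nat \<Rightarrow> 'a::comm_monoid_add"
  assumes "\<And>a b. a > m \<or> b > m \<Longrightarrow> h a b = 0"
  shows "(\<Sum>i=0..2*m. \<Sum>j=0..i. h (i-j) j) = (\<Sum>a=0..m. \<Sum>b=0..m. h a b)"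
proof -
  have "(\<Sum>i=0..2*m. \<Sum>j=0..i. h (i-j) j) = (\<Sum>(i,j)\<in>{(i,j). i+j \<le> 2*m}. h j i)"
    using sum.triangle_reindex_eq[of "\<lambda>i j. h j i" "2*m"] by (simp add: atLeast0AtMost)
  also have "\<dots> = (\<Sum>(i,j)\<in>{..m}\<times>{..m}. h j i)"
    by (rule sum.mono_neutral_right) (auto intro: assms finite_subset[of _ "{..2*m}\<times>{..2*m}"])
  also have "\<dots> = (\<Sum>i\<le>m. \<Sum>j\<le>m. h j i)"
    by (simp add: sum.cartesian_product)
  also have "\<dots> = (\<Sum>a=0..m. \<Sum>b=0..m. h a b)"
    by (subst sum.swap) (simp add: atLeast0AtMost)
  finally show ?thesis .
qed

lemma sum_conv_self:
  assumes "\<And>k. k > m \<Longrightarrow> x k = 0"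
  shows "(\<Sum>i=0..2*m. conv x x i) = (\<Sum>j=0..m. x j)^2"
proof -
  have "(\<Sum>i=0..2*m. conv x x i) = (\<Sum>a=0..m. \<Sum>b=0..m. x a * x b)"
    unfolding conv_def by (rule sum_antidiagonals_eq_sum_square) (use assms in auto)
  then show ?thesis
    by (simp add: power2_eq_square sum_product)
qed

lemma conv_self_nonneg: "(\<And>k. x k \<ge> 0) \<Longrightarrow> conv x x i \<ge> 0"
  unfolding conv_def by (intro sum_nonneg mult_nonneg_nonneg)

lemma tendsto_conv_self:
  assumes "\<And>k. (\<lambda>n. x n k) \<longlonglongrightarrow> z k"
  shows "(\<lambda>n. conv (x n) (x n) i) \<longlonglongrightarrow> conv z z i"
  unfolding conv_def by (intro tendsto_intros assms)

lemma sum_mult_ln_le_ln_sum_mult: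
  fixes p q :: "'a \<Rightarrow> real"
  assumes "finite A" "\<And>k. k \<in> A \<Longrightarrow> p k \<ge> 0" "sum p A = 1"
    and "\<And>k. k \<in> A \<Longrightarrow> p k > 0 \<Longrightarrow> q k > 0"
  shows "(\<Sum>k\<in>A. p k * ln (q k)) \<le> ln (\<Sum>k\<in>A. p k * q k)"
proof -
  define B where "B = {k\<in>A. p k > 0}"
  have restrict: "(\<Sum>k\<in>A. p k * f k) = (\<Sum>k\<in>B. p k * f k)" for f
    unfolding B_def using assms(1,2) by (intro sum.mono_neutral_right) force+
  have "sum p B = 1"
    using restrict[of "\<lambda>_. 1"] assms(3) by simp
  then have "B \<noteq> {}" by auto
  have "(\<Sum>k\<in>B. p k * ln (q k)) \<le> ln (\<Sum>k\<in>B. p k *\<^sub>R q k)"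
    by (rule concave_on_sum[OF _ \<open>B \<noteq> {}\<close> ln_concave \<open>sum p B = 1\<close>])
      (use assms(1,4) in \<open>auto simp: B_def\<close>)
  then show ?thesis
    by (simp add: restrict)
qed

lemma mult_ln_ge_diff:
  fixes r :: real
  assumes "r \<ge> 0"
  shows "r * ln r \<ge> r - 1"
proof (cases "r = 0")
  case False
  then have "r > 0" using assms by simp
  have "ln (1 / r) \<le> 1 / r - 1"
    using \<open>r > 0\<close> by (intro ln_le_minus_one) simp
  then have "r * (1 - 1 / r) \<le> r * ln r"
    using \<open>r > 0\<close> by (intro mult_left_mono) (auto simp: ln_div)
  then show ?thesis
    using \<open>r > 0\<close> by (simp add: algebra_simps)
qed simp

lemma incseq_LIMSEQ_of_subseq:
  fixes f :: "nat \<Rightarrow> real"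
  assumes "incseq f" "strict_mono r" "(\<lambda>n. f (r n)) \<longlonglongrightarrow> a"
  shows "f \<longlonglongrightarrow> a"
proof -
  have "incseq (\<lambda>n. f (r n))"
    using assms(1,2) by (simp add: incseq_def strict_mono_leD)
  then have "f n \<le> a" for n
    using incseq_le[OF _ assms(3)] assms(1,2) seq_suble[OF assms(2)]
    by (meson incseq_def order_trans)
  then obtain L where "f \<longlonglongrightarrow> L"
    using incseq_convergent[OF assms(1)] by blast
  moreover have "L = a"
    using LIMSEQ_subseq_LIMSEQ[OF \<open>f \<longlonglongrightarrow> L\<close> assms(2)] assms(3)
    by (simp add: o_def LIMSEQ_unique)
  ultimately show ?thesis by simp
qed

definition loglik :: "nat \<Rightarrow> (nat \<Rightarrow> real) \<Rightarrow> (nat \<Rightarrow> real) \<Rightarrow> real" where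
  "loglik m y x = (\<Sum>i=0..2*m. y i * ln (conv x x i)) - (\<Sum>j=0..m. x j)^2"

definition step_factor :: "nat \<Rightarrow> (nat \<Rightarrow> real) \<Rightarrow> (nat \<Rightarrow> real) \<Rightarrow> nat \<Rightarrow> real" where
  "step_factor m y x j = (if j \<le> m then
      (\<Sum>l=0..m. x l * y (l + j) / conv x x (l + j)) / sqrt (\<Sum>i=0..2*m. y i) else 0)"

lemma step_eq_mult_step_factor: "step m y x j = x j * step_factor m y x j"
  by (simp add: step_def step_factor_def)

lemma step_support: "k > m \<Longrightarrow> step m y x k = 0"
  by (simp add: step_def)

lemma step_factor_nonneg:
  assumes "\<forall>i\<le>2*m. y i \<ge> 0" "\<And>k. x k \<ge> 0"
  shows "step_factor m y x j \<ge> 0"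
  unfolding step_factor_def using assms conv_self_nonneg[of x]
  by (auto intro!: sum_nonneg divide_nonneg_nonneg mult_nonneg_nonneg)

lemma step_nonneg:
  assumes "\<forall>i\<le>2*m. y i \<ge> 0" "\<And>k. x k \<ge> 0"
  shows "step m y x j \<ge> 0"
  using assms step_factor_nonneg by (simp add: step_eq_mult_step_factor)

lemma step_factor_pos:
  assumes "\<forall>i\<le>2*m. y i \<ge> 0" "\<And>k. x k \<ge> 0" "sqrt (\<Sum>i=0..2*m. y i) > 0"
    and "j \<le> m" "l \<le> m" "x l > 0" "y (l + j) > 0" "conv x x (l + j) > 0"
  shows "step_factor m y x j > 0"
proof -
  have "0 < x l * y (l + j) / conv x x (l + j)"
    using assms(6-8) by simp
  also have "\<dots> \<le> (\<Sum>l=0..m. x l * y (l + j) / conv x x (l + j))"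
    using assms(1,2,4,5) conv_self_nonneg[of x]
    by (intro member_le_sum) (auto intro!: divide_nonneg_nonneg mult_nonneg_nonneg)
  finally show ?thesis
    using assms(3,4) by (simp add: step_factor_def)
qed

text \<open>Exchanging the order of summation turns the Jensen weights x_(i-j) x_j / (x*x)_i of
  the y_i-terms into the multipliers of the iteration.\<close>
lemma sum_conv_weights_eq:
  assumes "sqrt (\<Sum>i=0..2*m. y i) \<noteq> 0" "\<And>k. k > m \<Longrightarrow> x k = 0"
  shows "(\<Sum>i=0..2*m. y i * (\<Sum>j=0..i. x (i-j) * x j / conv x x i * (f (i-j) + f j)))
    = 2 * sqrt (\<Sum>i=0..2*m. y i) * (\<Sum>a=0..m. step m y x a * f a)"
proof -
  define c where "c = sqrt (\<Sum>i=0..2*m. y i)"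
  define g where "g a b = y (a+b) * (x a * x b / conv x x (a+b))" for a b
  have "(\<Sum>i=0..2*m. y i * (\<Sum>j=0..i. x (i-j) * x j / conv x x i * (f (i-j) + f j)))
      = (\<Sum>i=0..2*m. \<Sum>j=0..i. g (i-j) j * (f (i-j) + f j))"
    unfolding g_def sum_distrib_left by (intro sum.cong refl) (auto simp: algebra_simps)
  also have "\<dots> = (\<Sum>a=0..m. \<Sum>b=0..m. g a b * (f a + f b))"
    by (rule sum_antidiagonals_eq_sum_square) (use assms(2) in \<open>auto simp: g_def\<close>)
  also have "\<dots> = (\<Sum>a=0..m. \<Sum>b=0..m. g a b * f a) + (\<Sum>a=0..m. \<Sum>b=0..m. g a b * f b)"
    by (simp add: algebra_simps sum.distrib)
  also have "(\<Sum>a=0..m. \<Sum>b=0..m. g a b * f b) = (\<Sum>a=0..m. \<Sum>b=0..m. g a b * f a)"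
    by (subst sum.swap) (simp add: g_def algebra_simps)
  also have "(\<Sum>a=0..m. \<Sum>b=0..m. g a b * f a) = (\<Sum>a=0..m. c * (step m y x a * f a))"
  proof (intro sum.cong refl)
    fix a assume "a \<in> {0..m}"
    then have "(\<Sum>b=0..m. x b * y (b+a) / conv x x (b+a)) = c * step_factor m y x a"
      using assms(1) by (simp add: step_factor_def c_def)
    moreover have "(\<Sum>b=0..m. g a b * f a)
        = x a * f a * (\<Sum>b=0..m. x b * y (b+a) / conv x x (b+a))"
      unfolding g_def sum_distrib_left by (intro sum.cong refl) (simp add: algebra_simps)
    ultimately show "(\<Sum>b=0..m. g a b * f a) = c * (step m y x a * f a)"
      by (simp add: step_eq_mult_step_factor algebra_simps)
  qed
  finally show ?thesis
    by (simp add: sum_distrib_left c_def mult.assoc)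
qed

lemma sum_step:
  assumes "sqrt (\<Sum>i=0..2*m. y i) > 0" "\<And>k. k > m \<Longrightarrow> x k = 0"
    and "\<forall>i\<le>2*m. conv x x i > 0"
  shows "(\<Sum>j=0..m. step m y x j) = sqrt (\<Sum>i=0..2*m. y i)"
proof -
  define c where "c = sqrt (\<Sum>i=0..2*m. y i)"
  have "2 * c * (\<Sum>j=0..m. step m y x j * 1)
      = (\<Sum>i=0..2*m. y i * (\<Sum>j=0..i. x (i-j) * x j / conv x x i * (1 + 1)))"
    using sum_conv_weights_eq[where f = "\<lambda>_. 1"] assms(1,2) by (simp add: c_def)
  also have "\<dots> = (\<Sum>i=0..2*m. 2 * y i)"
    using assms(3) by (intro sum.cong refl)
      (simp add: sum_distrib_right [symmetric] sum_divide_distrib [symmetric] conv_def [symmetric]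
        less_imp_neq [symmetric])
  also have "\<dots> = 2 * (c * c)"
    using assms(1) by (simp add: sum_distrib_left [symmetric] c_def)
  finally have "c * (\<Sum>j=0..m. step m y x j) = c * c"
    by simp
  then show ?thesis
    using assms(1) by (simp add: c_def [symmetric])
qed

lemma ln_conv_mult_ge:
  fixes x r :: "nat \<Rightarrow> real"
  assumes "\<And>k. x k \<ge> 0" "conv x x i > 0"
    and "\<And>j. j \<le> i \<Longrightarrow> x (i-j) * x j > 0 \<Longrightarrow> r (i-j) > 0 \<and> r j > 0"
  shows "(\<Sum>j=0..i. x (i-j) * x j / conv x x i * (ln (r (i-j)) + ln (r j)))
    \<le> ln (conv (\<lambda>k. x k * r k) (\<lambda>k. x k * r k) i / conv x x i)"
proof -
  define p where "p j = x (i-j) * x j / conv x x i" for j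
  have p_nonneg: "p j \<ge> 0" for j
    unfolding p_def using assms(1,2) by simp
  have p_pos: "x (i-j) * x j > 0" if "p j > 0" for j
    using that assms(2) by (simp add: p_def zero_less_divide_iff)
  have "(\<Sum>j=0..i. p j * (ln (r (i-j)) + ln (r j))) = (\<Sum>j=0..i. p j * ln (r (i-j) * r j))"
  proof (intro sum.cong refl)
    fix j assume "j \<in> {0..i}"
    show "p j * (ln (r (i-j)) + ln (r j)) = p j * ln (r (i-j) * r j)"
    proof (cases "p j > 0")
      case True
      then have "r (i-j) > 0" "r j > 0"
        using assms(3) p_pos \<open>j \<in> {0..i}\<close> by auto
      then show ?thesis
        by (simp add: ln_mult)
    qed (use p_nonneg[of j] in simp)
  qed
  also have "\<dots> \<le> ln (\<Sum>j=0..i. p j * (r (i-j) * r j))"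
  proof (rule sum_mult_ln_le_ln_sum_mult)
    show "sum p {0..i} = 1"
      using assms(2) by (simp add: p_def conv_def sum_divide_distrib [symmetric])
  qed (use p_nonneg p_pos assms(3) in auto)
  also have "(\<Sum>j=0..i. p j * (r (i-j) * r j)) = conv (\<lambda>k. x k * r k) (\<lambda>k. x k * r k) i / conv x x i"
    by (simp add: p_def conv_def sum_divide_distrib algebra_simps)
  finally show ?thesis
    by (simp add: p_def)
qed

lemma sum_step_mult_ln_step_factor_ge:
  assumes y: "\<forall>i\<le>2*m. y i \<ge> 0" and mass_pos: "sqrt (\<Sum>i=0..2*m. y i) > 0"
    and supp: "\<And>k. k > m \<Longrightarrow> x k = 0" and nonneg: "\<And>k. x k \<ge> 0"
    and pos: "\<forall>i\<le>2*m. conv x x i > 0"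
  shows "sqrt (\<Sum>i=0..2*m. y i) - (\<Sum>j=0..m. x j)
    \<le> (\<Sum>j=0..m. step m y x j * ln (step_factor m y x j))"
proof -
  have "step m y x j - x j \<le> step m y x j * ln (step_factor m y x j)" for j
  proof -
    have "x j * (step_factor m y x j - 1) \<le> x j * (step_factor m y x j * ln (step_factor m y x j))"
      using nonneg mult_ln_ge_diff[OF step_factor_nonneg[OF y nonneg]] by (intro mult_left_mono)
    then show ?thesis
      by (simp add: step_eq_mult_step_factor algebra_simps)
  qed
  then have "(\<Sum>j=0..m. step m y x j - x j) \<le> (\<Sum>j=0..m. step m y x j * ln (step_factor m y x j))"
    by (rule sum_mono)
  then show ?thesis
    using sum_step[OF mass_pos supp pos] by (simp add: sum_subtractf)
qed

lemma loglik_le_loglik_step: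
  assumes y: "\<forall>i\<le>2*m. y i \<ge> 0" and mass_pos: "sqrt (\<Sum>i=0..2*m. y i) > 0"
    and supp: "\<And>k. k > m \<Longrightarrow> x k = 0" and nonneg: "\<And>k. x k \<ge> 0"
    and pos: "\<forall>i\<le>2*m. conv x x i > 0"
    and pos_step: "\<forall>i\<le>2*m. conv (step m y x) (step m y x) i > 0"
  shows "loglik m y x \<le> loglik m y (step m y x)"
proof -
  define c where "c = sqrt (\<Sum>i=0..2*m. y i)"
  define s where "s = (\<Sum>j=0..m. x j)"
  define r where "r = step_factor m y x"
  define x' where "x' = step m y x"
  have x': "x' = (\<lambda>k. x k * r k)"
    by (simp add: fun_eq_iff x'_def r_def step_eq_mult_step_factor)
  have r_pos: "r (i-j) > 0 \<and> r j > 0"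
    if "i \<le> 2*m" "y i > 0" "j \<le> i" "x (i-j) * x j > 0" for i j
  proof -
    have "x (i-j) > 0" "x j > 0"
      using that(4) nonneg[of "i-j"] nonneg[of j] by (auto simp: zero_less_mult_iff)
    moreover from this have "i - j \<le> m" "j \<le> m"
      using supp by (metis leI less_irrefl)+
    ultimately show ?thesis
      using step_factor_pos[OF y nonneg mass_pos] that pos unfolding r_def by simp
  qed
  have jensen: "y i * (\<Sum>j=0..i. x (i-j) * x j / conv x x i * (ln (r (i-j)) + ln (r j)))
      \<le> y i * (ln (conv x' x' i) - ln (conv x x i))" if "i \<le> 2*m" for i
  proof (cases "y i > 0")
    case True
    have "(\<Sum>j=0..i. x (i-j) * x j / conv x x i * (ln (r (i-j)) + ln (r j)))
        \<le> ln (conv x' x' i / conv x x i)"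
      unfolding x' by (rule ln_conv_mult_ge[OF nonneg]) (use pos that True r_pos in auto)
    also have "\<dots> = ln (conv x' x' i) - ln (conv x x i)"
      using pos pos_step that unfolding x'_def by (intro ln_divide_pos) auto
    finally show ?thesis
      using True by (intro mult_left_mono) auto
  qed (use y that in force)
  have "c - s \<le> (\<Sum>a=0..m. x' a * ln (r a))"
    using sum_step_mult_ln_step_factor_ge[OF y mass_pos supp nonneg pos] by (simp add: c_def s_def x'_def r_def)
  then have "2 * c * (c - s) \<le> 2 * c * (\<Sum>a=0..m. x' a * ln (r a))"
    using mass_pos by (simp add: c_def)
  also have "\<dots> = (\<Sum>i=0..2*m. y i * (\<Sum>j=0..i. x (i-j) * x j / conv x x i * (ln (r (i-j)) + ln (r j))))"
    using sum_conv_weights_eq[where f = "\<lambda>a. ln (r a)"] mass_pos supp by (simp add: x'_def c_def)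
  also have "\<dots> \<le> (\<Sum>i=0..2*m. y i * (ln (conv x' x' i) - ln (conv x x i)))"
    using jensen by (intro sum_mono) auto
  also have "\<dots> = (loglik m y x' + c^2) - (loglik m y x + s^2)"
    using sum_step[OF mass_pos supp pos]
    by (simp add: loglik_def x'_def c_def s_def right_diff_distrib sum_subtractf)
  finally have "(c - s)^2 \<le> loglik m y x' - loglik m y x"
    by (simp add: power2_eq_square algebra_simps)
  then show ?thesis
    using zero_le_power2[of "c - s"] unfolding x'_def by linarith
qed

lemma conv_ge_exp_loglik:
  fixes m :: nat and y x :: "nat \<Rightarrow> real"
  defines "Y \<equiv> \<Sum>i=0..2*m. y i"
  assumes y: "\<forall>i\<le>2*m. y i \<ge> 0" and supp: "\<And>k. k > m \<Longrightarrow> x k = 0"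
    and nonneg: "\<And>k. x k \<ge> 0" and pos: "\<forall>i\<le>2*m. conv x x i > 0"
    and mass: "(\<Sum>j=0..m. x j) = sqrt Y"
    and i: "i \<le> 2*m" "y i > 0"
  shows "exp ((loglik m y x + Y - Y * \<bar>ln Y\<bar>) / y i) \<le> conv x x i"
proof -
  have "Y \<ge> 0"
    unfolding Y_def by (rule sum_nonneg) (use y in auto)
  then have total: "(\<Sum>k=0..2*m. conv x x k) = Y"
    using sum_conv_self[OF supp] mass by simp
  have conv_le: "conv x x k \<le> Y" if "k \<le> 2*m" for k
    unfolding total [symmetric] by (rule member_le_sum) (use that conv_self_nonneg nonneg in auto)
  have "(\<Sum>k\<in>{0..2*m}-{i}. y k * ln (conv x x k)) \<le> (\<Sum>k\<in>{0..2*m}-{i}. y k * \<bar>ln Y\<bar>)"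
  proof (rule sum_mono)
    fix k assume k: "k \<in> {0..2*m}-{i}"
    then have "0 < conv x x k" "conv x x k \<le> Y"
      using pos conv_le by auto
    then have "ln (conv x x k) \<le> ln Y"
      by simp
    then show "y k * ln (conv x x k) \<le> y k * \<bar>ln Y\<bar>"
      using y k by (intro mult_left_mono) auto
  qed
  also have "\<dots> \<le> Y * \<bar>ln Y\<bar>"
    unfolding sum_distrib_right [symmetric] Y_def by (intro mult_right_mono sum_mono2) (use y in auto)
  finally have "(\<Sum>k\<in>{0..2*m}-{i}. y k * ln (conv x x k)) \<le> Y * \<bar>ln Y\<bar>" .
  moreover have "loglik m y x = y i * ln (conv x x i) + (\<Sum>k\<in>{0..2*m}-{i}. y k * ln (conv x x k)) - Y"
    using sum.remove[of "{0..2*m}" i] i mass \<open>Y \<ge> 0\<close> by (simp add: loglik_def)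
  ultimately have "(loglik m y x + Y - Y * \<bar>ln Y\<bar>) / y i \<le> ln (conv x x i)"
    using i by (simp add: pos_divide_le_eq mult.commute)
  then show ?thesis
    using pos i by (simp add: ln_ge_iff)
qed

lemma tendsto_loglik:
  assumes "\<And>k. (\<lambda>n. x n k) \<longlonglongrightarrow> z k" and "\<And>i. i \<le> 2*m \<Longrightarrow> y i \<noteq> 0 \<Longrightarrow> conv z z i \<noteq> 0"
  shows "(\<lambda>n. loglik m y (x n)) \<longlonglongrightarrow> loglik m y z"
proof -
  have terms: "(\<lambda>n. y i * ln (conv (x n) (x n) i)) \<longlonglongrightarrow> y i * ln (conv z z i)"
    if "i \<in> {0..2*m}" for i
    using that assms(2) tendsto_conv_self[OF assms(1)] by (cases "y i = 0") (auto intro!: tendsto_intros)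
  show ?thesis
    unfolding loglik_def by (intro tendsto_diff tendsto_sum tendsto_power terms assms(1))
qed

lemma Idiv_conv_self_eq:
  assumes y: "\<forall>i\<le>2*m. y i \<ge> 0" and supp: "\<And>k. k > m \<Longrightarrow> z k = 0"
    and pos: "\<And>i. i \<le> 2*m \<Longrightarrow> y i > 0 \<Longrightarrow> conv z z i > 0"
  shows "Idiv m y (conv z z) = ereal ((\<Sum>i=0..2*m. if y i = 0 then 0 else y i * ln (y i))
    - (\<Sum>i=0..2*m. y i) - loglik m y z)"
proof -
  have "(\<Sum>i=0..2*m. (if y i = 0 then 0 else y i * ln (y i / conv z z i)) - y i + conv z z i)
     = (\<Sum>i=0..2*m. ((if y i = 0 then 0 else y i * ln (y i)) - y i) - (y i * ln (conv z z i) - conv z z i))"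
  proof (intro sum.cong refl)
    fix i assume i: "i \<in> {0..2*m}"
    show "(if y i = 0 then 0 else y i * ln (y i / conv z z i)) - y i + conv z z i
      = ((if y i = 0 then 0 else y i * ln (y i)) - y i) - (y i * ln (conv z z i) - conv z z i)"
    proof (cases "y i = 0")
      case False
      then have "y i > 0" "conv z z i > 0"
        using y pos i by force+
      then show ?thesis
        by (simp add: ln_divide_pos algebra_simps)
    qed simp
  qed
  also have "\<dots> = (\<Sum>i=0..2*m. if y i = 0 then 0 else y i * ln (y i)) - (\<Sum>i=0..2*m. y i)
     - ((\<Sum>i=0..2*m. y i * ln (conv z z i)) - (\<Sum>i=0..2*m. conv z z i))"
    by (simp add: sum_subtractf)
  moreover have "\<not> (\<exists>i\<le>2*m. y i > 0 \<and> conv z z i = 0)"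
    using pos by force
  ultimately show ?thesis
    using sum_conv_self[OF supp] by (simp add: Idiv_def loglik_def)
qed

locale autoconv_iteration =
  fixes m :: nat and y :: "nat \<Rightarrow> real" and X :: "nat \<Rightarrow> nat \<Rightarrow> real"
  assumes y_nonneg: "\<forall>i\<le>2*m. y i \<ge> 0"
    and mass_pos: "sqrt (\<Sum>i=0..2*m. y i) > 0"
    and X0_nonneg: "\<forall>j\<le>m. X 0 j \<ge> 0"
    and X0_support: "\<forall>k>m. X 0 k = 0"
    and X_Suc: "\<forall>t. X (Suc t) = step m y (X t)"
    and conv_X_pos: "\<forall>t. \<forall>i\<le>2*m. conv (X t) (X t) i > 0"
begin

lemma X_support: "k > m \<Longrightarrow> X t k = 0"
  by (cases t) (use X0_support X_Suc step_support in auto)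

lemma X_nonneg: "X t k \<ge> 0"
proof (induction t arbitrary: k)
  case 0
  then show ?case
    using X0_nonneg X0_support by (cases "k \<le> m") auto
next
  case (Suc t)
  then show ?case
    using X_Suc step_nonneg[OF y_nonneg] by simp
qed

lemma incseq_loglik: "incseq (\<lambda>t. loglik m y (X t))"
proof (rule incseq_SucI)
  fix t
  have "\<forall>i\<le>2*m. conv (step m y (X t)) (step m y (X t)) i > 0"
    using spec[OF conv_X_pos, of "Suc t"] X_Suc by simp
  then show "loglik m y (X t) \<le> loglik m y (X (Suc t))"
    using loglik_le_loglik_step[OF y_nonneg mass_pos X_support X_nonneg] conv_X_pos X_Suc
    by simp
qed

lemma conv_X_bounded_below:
  assumes "i \<le> 2*m" "y i > 0"
  obtains \<delta> where "\<delta> > 0" "\<And>t. t \<ge> 1 \<Longrightarrow> \<delta> \<le> conv (X t) (X t) i"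
proof
  define Y where "Y = (\<Sum>i=0..2*m. y i)"
  show "exp ((loglik m y (X 0) + Y - Y * \<bar>ln Y\<bar>) / y i) > 0"
    by simp
  fix t :: nat assume "t \<ge> 1"
  (* X 0 need not have the mass c that every later iterate has *)
  then obtain s where "t = Suc s"
    by (cases t) auto
  then have mass: "(\<Sum>j=0..m. X t j) = sqrt Y"
    using sum_step[OF mass_pos X_support] conv_X_pos X_Suc by (simp add: Y_def)
  have "loglik m y (X 0) \<le> loglik m y (X t)"
    using incseq_loglik by (simp add: incseq_def)
  then have "exp ((loglik m y (X 0) + Y - Y * \<bar>ln Y\<bar>) / y i)
      \<le> exp ((loglik m y (X t) + Y - Y * \<bar>ln Y\<bar>) / y i)"
    using assms(2) by (simp add: divide_right_mono)
  also have "\<dots> \<le> conv (X t) (X t) i"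
    unfolding Y_def by (rule conv_ge_exp_loglik)
      (use y_nonneg X_support X_nonneg conv_X_pos mass assms in \<open>auto simp: Y_def\<close>)
  finally show "exp ((loglik m y (X 0) + Y - Y * \<bar>ln Y\<bar>) / y i) \<le> conv (X t) (X t) i" .
qed

lemma limit_point_subseq:
  assumes "is_limit_point m X z"
  obtains r where "strict_mono r" "\<And>k. (\<lambda>n. X (r n) k) \<longlonglongrightarrow> z k"
proof -
  obtain r where r: "strict_mono r" "\<forall>j\<le>m. (\<lambda>n. X (r n) j) \<longlonglongrightarrow> z j"
    using assms unfolding is_limit_point_def by blast
  have "(\<lambda>n. X (r n) k) \<longlonglongrightarrow> z k" for k
    using r(2) assms X_support by (cases "k \<le> m") (auto simp: is_limit_point_def)
  with r(1) show thesis
    by (rule that)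
qed

lemma limit_point_conv_pos:
  assumes "is_limit_point m X z" "i \<le> 2*m" "y i > 0"
  shows "conv z z i > 0"
proof -
  obtain r where r: "strict_mono r" "\<And>k. (\<lambda>n. X (r n) k) \<longlonglongrightarrow> z k"
    using limit_point_subseq[OF assms(1)] by blast
  obtain \<delta> where \<delta>: "\<delta> > 0" "\<And>t. t \<ge> 1 \<Longrightarrow> \<delta> \<le> conv (X t) (X t) i"
    using conv_X_bounded_below[OF assms(2,3)] by blast
  have "\<delta> \<le> conv z z i"
  proof (rule LIMSEQ_le_const[OF tendsto_conv_self[OF r(2)]], intro exI allI impI)
    fix n :: nat assume "1 \<le> n"
    then show "\<delta> \<le> conv (X (r n)) (X (r n)) i"
      using \<delta>(2) seq_suble[OF r(1), of n] by simp
  qed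
  with \<delta>(1) show ?thesis
    by simp
qed

lemma loglik_LIMSEQ_limit_point:
  assumes "is_limit_point m X z"
  shows "(\<lambda>t. loglik m y (X t)) \<longlonglongrightarrow> loglik m y z"
proof -
  obtain r where r: "strict_mono r" "\<And>k. (\<lambda>n. X (r n) k) \<longlonglongrightarrow> z k"
    using limit_point_subseq[OF assms] by blast
  have "(\<lambda>n. loglik m y (X (r n))) \<longlonglongrightarrow> loglik m y z"
    by (rule tendsto_loglik[OF r(2)]) (use limit_point_conv_pos[OF assms] y_nonneg in force)
  then show ?thesis
    by (rule incseq_LIMSEQ_of_subseq[OF incseq_loglik r(1)])
qed

lemma Idiv_limit_point:
  assumes "is_limit_point m X z"
  shows "Idiv m y (conv z z) = ereal ((\<Sum>i=0..2*m. if y i = 0 then 0 else y i * ln (y i))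
    - (\<Sum>i=0..2*m. y i) - loglik m y z)"
  by (rule Idiv_conv_self_eq[OF y_nonneg])
    (use assms limit_point_conv_pos[OF assms] in \<open>auto simp: is_limit_point_def\<close>)

end

theorem proposition5:
  fixes m :: nat and y :: "nat \<Rightarrow> real" and X :: "nat \<Rightarrow> nat \<Rightarrow> real"
  assumes "m \<ge> 1"
    and "\<forall>i\<le>2*m. y i \<ge> 0"
    and "sqrt (\<Sum>i=0..2*m. y i) > 0"
    and "\<forall>j\<le>m. X 0 j \<ge> 0"
    and "\<forall>k>m. X 0 k = 0"
    and "\<forall>t. X (Suc t) = step m y (X t)"
    and "\<forall>t. \<forall>i\<le>2*m. conv (X t) (X t) i > 0"
    and "is_limit_point m X u"
    and "is_limit_point m X w"
  shows "Idiv m y (conv u u) = Idiv m y (conv w w)"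
proof -
  (* the argument works in every dimension *)
  interpret autoconv_iteration m y X
    by (rule autoconv_iteration.intro) (fact assms)+
  have "loglik m y u = loglik m y w"
    using loglik_LIMSEQ_limit_point[OF assms(8)] loglik_LIMSEQ_limit_point[OF assms(9)]
    by (rule LIMSEQ_unique)
  then show ?thesis
    using Idiv_limit_point[OF assms(8)] Idiv_limit_point[OF assms(9)] by simp
qed

end
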